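(* Let $X_1,X_2,X_3,X_4$ be random vectors in a sublinear expectation space. The following are equivalent: (1) $X_1\dashrightarrow X_2\dashrightarrow X_3\dashrightarrow X_4$; (2) $(X_1,X_2)\dashrightarrow(X_3,X_4)$, $X_1\dashrightarrow X_2$ and $X_3\dashrightarrow X_4$.
   Context: Sublinear expectation space $(\Omega,\mathcal H,\hat{\mathbb E})$: $\hat{\mathbb E}$ is monotone, constant-preserving, sub-additive and positively homogeneous (in the paper $\hat{\mathbb E}[X]=\sup_{Q\in\mathcal P}E_Q[X]$). For random vectors $X,Y$, $X\dashrightarrow Y$ means $\hat{\mathbb E}[\varphi(X,Y)]=\hat{\mathbb E}[\hat{\mathbb E}[\varphi(x,Y)]_{x=X}]$ for all bounded Lipschitz $\varphi$; $X_1\dashrightarrow\cdots\dashrightarrow X_n$ means $(X_1,\dots,X_i)\dashrightarrow X_{i+1}$ for $i=1,\dots,n-1$. *)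

theory Defs
  imports "HOL-Analysis.Analysis"
begin

definition bounded_lip :: "('a::metric_space \<Rightarrow> real) \<Rightarrow> bool" where
  "bounded_lip \<phi> \<longleftrightarrow> bounded (range \<phi>) \<and> (\<exists>C. C-lipschitz_on UNIV \<phi>)"

text \<open>Sublinear expectation space (\<Omega>, H, E): H is a linear space of real functions on \<Omega>
  containing the constants and closed under composition with bounded Lipschitz functions
  phi : R^n -> R (for every n; R^n encoded by the first n coordinates of nat => real,
  with the l1 distance), and E : H -> R is monotone, constant preserving, sub-additive
  and positively homogeneous.\<close>
definition sublinear_expectation_space ::
  "('w \<Rightarrow> real) set \<Rightarrow> (('w \<Rightarrow> real) \<Rightarrow> real) \<Rightarrow> bool" where
  "sublinear_expectation_space H E \<longleftrightarrow>
     (\<forall>c. (\<lambda>_. c) \<in> H) \<and>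
     (\<forall>X\<in>H. \<forall>Y\<in>H. (\<lambda>\<omega>. X \<omega> + Y \<omega>) \<in> H) \<and>
     (\<forall>X\<in>H. \<forall>c. (\<lambda>\<omega>. c * X \<omega>) \<in> H) \<and>
     (\<forall>(n::nat) (Xs :: nat \<Rightarrow> 'w \<Rightarrow> real) (\<phi> :: (nat \<Rightarrow> real) \<Rightarrow> real).
        (\<forall>i<n. Xs i \<in> H) \<and> (\<exists>M. \<forall>x. \<bar>\<phi> x\<bar> \<le> M) \<and>
        (\<exists>L. \<forall>x y. \<bar>\<phi> x - \<phi> y\<bar> \<le> L * (\<Sum>i<n. \<bar>x i - y i\<bar>))
        \<longrightarrow> (\<lambda>\<omega>. \<phi> (\<lambda>i. Xs i \<omega>)) \<in> H) \<and>
     (\<forall>X\<in>H. \<forall>Y\<in>H. (\<forall>\<omega>. X \<omega> \<le> Y \<omega>) \<longrightarrow> E X \<le> E Y) \<and>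
     (\<forall>c. E (\<lambda>_. c) = c) \<and>
     (\<forall>X\<in>H. \<forall>Y\<in>H. E (\<lambda>\<omega>. X \<omega> + Y \<omega>) \<le> E X + E Y) \<and>
     (\<forall>X\<in>H. \<forall>c\<ge>0. E (\<lambda>\<omega>. c * X \<omega>) = c * E X)"

definition random_vector :: "('w \<Rightarrow> real) set \<Rightarrow> ('w \<Rightarrow> 'a::euclidean_space) \<Rightarrow> bool" where
  "random_vector H X \<longleftrightarrow> (\<forall>b\<in>Basis. (\<lambda>\<omega>. X \<omega> \<bullet> b) \<in> H)"

definition sl_indep ::
  "(('w \<Rightarrow> real) \<Rightarrow> real) \<Rightarrow> ('w \<Rightarrow> 'a::euclidean_space) \<Rightarrow> ('w \<Rightarrow> 'b::euclidean_space) \<Rightarrow> bool" where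
  "sl_indep E X Y \<longleftrightarrow>
     (\<forall>\<phi> :: 'a \<times> 'b \<Rightarrow> real. bounded_lip \<phi> \<longrightarrow>
        E (\<lambda>\<omega>. \<phi> (X \<omega>, Y \<omega>)) = E (\<lambda>\<omega>. E (\<lambda>\<omega>'. \<phi> (X \<omega>, Y \<omega>'))))"

end

theory Submission
  imports Defs
begin

text \<open>Write \<open>P = (X\<^sub>1, X\<^sub>2)\<close>. Projecting \<open>(P, X\<^sub>3) \<dashrightarrow> X\<^sub>4\<close> onto its last two components shows
  that both conditions contain \<open>X\<^sub>1 \<dashrightarrow> X\<^sub>2\<close> and \<open>X\<^sub>3 \<dashrightarrow> X\<^sub>4\<close>; under \<open>X\<^sub>3 \<dashrightarrow> X\<^sub>4\<close> the pair of
  conditions \<open>P \<dashrightarrow> X\<^sub>3\<close>, \<open>(P, X\<^sub>3) \<dashrightarrow> X\<^sub>4\<close> is equivalent to \<open>P \<dashrightarrow> (X\<^sub>3, X\<^sub>4)\<close>. Both directions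
  iterate expectations through \<open>\<psi>(p, x\<^sub>3) = E[\<phi>(p, x\<^sub>3, X\<^sub>4)]\<close>: sublinearity makes \<open>\<psi>\<close> bounded
  Lipschitz again, so it is an admissible test function, and \<open>X\<^sub>3 \<dashrightarrow> X\<^sub>4\<close> gives
  \<open>E[\<psi>(p, X\<^sub>3)] = E[\<phi>(p, X\<^sub>3, X\<^sub>4)]\<close> for every fixed \<open>p\<close>.\<close>

lemma bounded_lip_compose:
  assumes "bounded_lip \<phi>" and "L-lipschitz_on UNIV f"
  shows "bounded_lip (\<lambda>x. \<phi> (f x))"
proof -
  obtain C where C: "C-lipschitz_on UNIV \<phi>" and bounded: "bounded (range \<phi>)"
    using assms(1) unfolding bounded_lip_def by blast
  have "(C * L)-lipschitz_on UNIV (\<lambda>x. \<phi> (f x))"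
    by (rule lipschitz_on_compose2[OF assms(2) lipschitz_on_subset[OF C subset_UNIV]])
  moreover have "bounded (range (\<lambda>x. \<phi> (f x)))"
    by (rule bounded_subset[OF bounded]) auto
  ultimately show ?thesis
    unfolding bounded_lip_def by blast
qed

lemma lipschitz_on_fst: "1-lipschitz_on U fst"
  by (rule lipschitz_onI) (simp_all add: dist_fst_le)

lemma lipschitz_on_snd: "1-lipschitz_on U snd"
  by (rule lipschitz_onI) (simp_all add: dist_snd_le)

lemma lipschitz_on_Pair_const: "1-lipschitz_on U (Pair a)"
  by (rule lipschitz_onI) (simp_all add: dist_Pair_Pair)

lemma lipschitz_on_prod_assoc: "1-lipschitz_on U (\<lambda>((a, b), c). (a, (b, c)))"
  by (rule lipschitz_onI) (auto simp: dist_Pair_Pair)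

lemma lipschitz_on_prod_assoc_inv: "1-lipschitz_on U (\<lambda>(a, (b, c)). ((a, b), c))"
  by (rule lipschitz_onI) (auto simp: dist_Pair_Pair)

lemma sl_indepD:
  assumes "sl_indep E X Y" and "bounded_lip \<phi>"
  shows "E (\<lambda>\<omega>. \<phi> (X \<omega>, Y \<omega>)) = E (\<lambda>\<omega>. E (\<lambda>\<omega>'. \<phi> (X \<omega>, Y \<omega>')))"
  using assms unfolding sl_indep_def by blast

lemma sl_indep_map:
  fixes f :: "'a::euclidean_space \<Rightarrow> 'c::euclidean_space"
    and g :: "'b::euclidean_space \<Rightarrow> 'd::euclidean_space"
  assumes "sl_indep E X Y" and f: "L-lipschitz_on UNIV f" and g: "M-lipschitz_on UNIV g"
  shows "sl_indep E (\<lambda>\<omega>. f (X \<omega>)) (\<lambda>\<omega>. g (Y \<omega>))"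
  unfolding sl_indep_def
proof (intro allI impI)
  fix \<phi> :: "'c \<times> 'd \<Rightarrow> real"
  assume "bounded_lip \<phi>"
  have "(L * 1)-lipschitz_on UNIV (\<lambda>z. f (fst z))"
    by (rule lipschitz_on_compose2[OF lipschitz_on_fst lipschitz_on_subset[OF f subset_UNIV]])
  moreover have "(M * 1)-lipschitz_on UNIV (\<lambda>z. g (snd z))"
    by (rule lipschitz_on_compose2[OF lipschitz_on_snd lipschitz_on_subset[OF g subset_UNIV]])
  ultimately have "bounded_lip (\<lambda>z. \<phi> (f (fst z), g (snd z)))"
    by (rule bounded_lip_compose[OF \<open>bounded_lip \<phi>\<close> lipschitz_on_Pair])
  from sl_indepD[OF assms(1) this]
  show "E (\<lambda>\<omega>. \<phi> (f (X \<omega>), g (Y \<omega>))) = E (\<lambda>\<omega>. E (\<lambda>\<omega>'. \<phi> (f (X \<omega>), g (Y \<omega>'))))"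
    unfolding fst_conv snd_conv .
qed

lemma sl_indep_Pair_const:
  assumes "sl_indep E U V"
  shows "sl_indep E (\<lambda>\<omega>. (z, U \<omega>)) V"
  using sl_indep_map[OF assms lipschitz_on_Pair_const lipschitz_on_id] .

lemma sl_indep_fst_right:
  assumes "sl_indep E Z (\<lambda>\<omega>. (U \<omega>, V \<omega>))"
  shows "sl_indep E Z U"
  using sl_indep_map[OF assms lipschitz_on_id lipschitz_on_fst] by (simp only: fst_conv)

lemma sl_indep_snd_left:
  assumes "sl_indep E (\<lambda>\<omega>. (Z \<omega>, U \<omega>)) V"
  shows "sl_indep E U V"
  using sl_indep_map[OF assms lipschitz_on_snd lipschitz_on_id] by (simp only: snd_conv)

lemma euclidean_representation_list:
  fixes y :: "'a::euclidean_space"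
  assumes "set bs = Basis" and "distinct bs"
  shows "(\<Sum>i<length bs. (y \<bullet> bs ! i) *\<^sub>R bs ! i) = y"
proof -
  have "(\<Sum>i<length bs. (y \<bullet> bs ! i) *\<^sub>R bs ! i) = sum_list (map (\<lambda>b. (y \<bullet> b) *\<^sub>R b) bs)"
    by (simp add: sum_list_sum_nth lessThan_atLeast0)
  also have "\<dots> = (\<Sum>b\<in>Basis. (y \<bullet> b) *\<^sub>R b)"
    using assms by (simp add: sum_list_distinct_conv_sum_set)
  finally show ?thesis
    by (simp add: euclidean_representation)
qed

lemma dist_sum_Basis_le:
  fixes bs :: "'a::euclidean_space list"
  assumes "set bs \<subseteq> Basis"
  shows "dist (\<Sum>i<length bs. v i *\<^sub>R bs ! i) (\<Sum>i<length bs. w i *\<^sub>R bs ! i)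
           \<le> (\<Sum>i<length bs. \<bar>v i - w i\<bar>)"
proof -
  have "dist (\<Sum>i<length bs. v i *\<^sub>R bs ! i) (\<Sum>i<length bs. w i *\<^sub>R bs ! i)
          = norm (\<Sum>i<length bs. (v i - w i) *\<^sub>R bs ! i)"
    by (simp add: dist_norm sum_subtractf scaleR_diff_left)
  also have "\<dots> \<le> (\<Sum>i<length bs. norm ((v i - w i) *\<^sub>R bs ! i))"
    by (rule norm_sum)
  also have "\<dots> = (\<Sum>i<length bs. \<bar>v i - w i\<bar>)"
  proof (rule sum.cong[OF refl])
    fix i
    assume "i \<in> {..<length bs}"
    then have "bs ! i \<in> Basis"
      using assms by auto
    then show "norm ((v i - w i) *\<^sub>R bs ! i) = \<bar>v i - w i\<bar>"
      by (simp add: norm_Basis)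
  qed
  finally show ?thesis .
qed

locale sublinear_expectation =
  fixes H :: "('w \<Rightarrow> real) set" and E :: "('w \<Rightarrow> real) \<Rightarrow> real"
  assumes space: "sublinear_expectation_space H E"
begin

lemma constant_in_H: "(\<lambda>_. c) \<in> H"
  using space unfolding sublinear_expectation_space_def by blast

lemma add_in_H: "X \<in> H \<Longrightarrow> Y \<in> H \<Longrightarrow> (\<lambda>\<omega>. X \<omega> + Y \<omega>) \<in> H"
  using space unfolding sublinear_expectation_space_def by blast

lemma lipschitz_coordinates_in_H:
  fixes n :: nat and Xs :: "nat \<Rightarrow> 'w \<Rightarrow> real" and \<phi> :: "(nat \<Rightarrow> real) \<Rightarrow> real"
  assumes "\<forall>i<n. Xs i \<in> H" and "\<exists>M. \<forall>x. \<bar>\<phi> x\<bar> \<le> M"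
    and "\<exists>L. \<forall>x y. \<bar>\<phi> x - \<phi> y\<bar> \<le> L * (\<Sum>i<n. \<bar>x i - y i\<bar>)"
  shows "(\<lambda>\<omega>. \<phi> (\<lambda>i. Xs i \<omega>)) \<in> H"
  using assms space[unfolded sublinear_expectation_space_def,
      THEN conjunct2, THEN conjunct2, THEN conjunct2, THEN conjunct1]
  by blast

lemma expectation_mono: "X \<in> H \<Longrightarrow> Y \<in> H \<Longrightarrow> (\<And>\<omega>. X \<omega> \<le> Y \<omega>) \<Longrightarrow> E X \<le> E Y"
  using space unfolding sublinear_expectation_space_def by blast

lemma expectation_const: "E (\<lambda>_. c) = c"
  using space unfolding sublinear_expectation_space_def by blast

lemma expectation_add_le: "X \<in> H \<Longrightarrow> Y \<in> H \<Longrightarrow> E (\<lambda>\<omega>. X \<omega> + Y \<omega>) \<le> E X + E Y"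
  using space unfolding sublinear_expectation_space_def by blast

lemma expectation_le_shift:
  assumes "X \<in> H" and "Y \<in> H" and "\<And>\<omega>. X \<omega> \<le> Y \<omega> + c"
  shows "E X \<le> E Y + c"
proof -
  have "E X \<le> E (\<lambda>\<omega>. Y \<omega> + c)"
    using assms by (intro expectation_mono add_in_H constant_in_H)
  also have "\<dots> \<le> E Y + c"
    using expectation_add_le[OF \<open>Y \<in> H\<close> constant_in_H] by (simp add: expectation_const)
  finally show ?thesis .
qed

lemma bounded_lip_random_vector_in_H:
  fixes Y :: "'w \<Rightarrow> 'a::euclidean_space"
  assumes Y: "random_vector H Y" and "bounded_lip \<phi>"
  shows "(\<lambda>\<omega>. \<phi> (Y \<omega>)) \<in> H"
proof -
  obtain C where C: "C-lipschitz_on UNIV \<phi>" and "bounded (range \<phi>)"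
    using \<open>bounded_lip \<phi>\<close> unfolding bounded_lip_def by blast
  then obtain M where M: "\<And>y. \<bar>\<phi> y\<bar> \<le> M"
    unfolding bounded_iff by auto
  obtain bs where bs: "set bs = (Basis :: 'a set)" "distinct bs"
    using finite_distinct_list[OF finite_Basis] by blast
  define \<psi> where "\<psi> = (\<lambda>v. \<phi> (\<Sum>i<length bs. v i *\<^sub>R bs ! i))"
  have "\<bar>\<psi> v - \<psi> w\<bar> \<le> C * (\<Sum>i<length bs. \<bar>v i - w i\<bar>)" for v w
  proof -
    have "\<bar>\<psi> v - \<psi> w\<bar> \<le> C * dist (\<Sum>i<length bs. v i *\<^sub>R bs ! i) (\<Sum>i<length bs. w i *\<^sub>R bs ! i)"
      unfolding \<psi>_def using lipschitz_onD[OF C] by (simp add: dist_real_def)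
    also have "\<dots> \<le> C * (\<Sum>i<length bs. \<bar>v i - w i\<bar>)"
      using bs lipschitz_on_nonneg[OF C] by (intro mult_left_mono dist_sum_Basis_le) simp_all
    finally show ?thesis .
  qed
  moreover have "\<bar>\<psi> v\<bar> \<le> M" for v
    unfolding \<psi>_def by (rule M)
  moreover have "\<forall>i<length bs. (\<lambda>\<omega>. Y \<omega> \<bullet> bs ! i) \<in> H"
    using Y bs unfolding random_vector_def by auto
  ultimately have "(\<lambda>\<omega>. \<psi> (\<lambda>i. Y \<omega> \<bullet> bs ! i)) \<in> H"
    by (intro lipschitz_coordinates_in_H[of "length bs" _ \<psi>]) blast+
  then show ?thesis
    using euclidean_representation_list[OF bs] by (simp add: \<psi>_def)
qed

lemma bounded_lip_partial_expectation:
  fixes Y :: "'w \<Rightarrow> 'b::euclidean_space" and \<phi> :: "'a::metric_space \<times> 'b \<Rightarrow> real"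
  assumes Y: "random_vector H Y" and "bounded_lip \<phi>"
  shows "bounded_lip (\<lambda>x. E (\<lambda>\<omega>. \<phi> (x, Y \<omega>)))"
proof -
  obtain C where C: "C-lipschitz_on UNIV \<phi>" and "bounded (range \<phi>)"
    using \<open>bounded_lip \<phi>\<close> unfolding bounded_lip_def by blast
  then obtain M where M_abs: "\<And>z. \<bar>\<phi> z\<bar> \<le> M"
    unfolding bounded_iff by auto
  have M: "- M \<le> \<phi> z" "\<phi> z \<le> M" for z
    using M_abs[of z] by arith+
  have in_H: "(\<lambda>\<omega>. \<phi> (x, Y \<omega>)) \<in> H" for x
    using \<open>bounded_lip \<phi>\<close> lipschitz_on_Pair_const
    by (intro bounded_lip_random_vector_in_H[OF Y]) (rule bounded_lip_compose)
  have shift: "E (\<lambda>\<omega>. \<phi> (x, Y \<omega>)) \<le> E (\<lambda>\<omega>. \<phi> (x', Y \<omega>)) + C * dist x x'" for x x'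
  proof (rule expectation_le_shift[OF in_H in_H])
    fix \<omega>
    show "\<phi> (x, Y \<omega>) \<le> \<phi> (x', Y \<omega>) + C * dist x x'"
      using lipschitz_onD[OF C, of "(x, Y \<omega>)" "(x', Y \<omega>)"]
      by (simp add: dist_Pair_Pair dist_real_def)
  qed
  have "C-lipschitz_on UNIV (\<lambda>x. E (\<lambda>\<omega>. \<phi> (x, Y \<omega>)))"
  proof (rule lipschitz_onI[OF _ lipschitz_on_nonneg[OF C]])
    fix x y
    show "dist (E (\<lambda>\<omega>. \<phi> (x, Y \<omega>))) (E (\<lambda>\<omega>. \<phi> (y, Y \<omega>))) \<le> C * dist x y"
      using shift[of x y] shift[of y x] by (simp add: dist_real_def dist_commute abs_le_iff)
  qed
  moreover have "\<bar>E (\<lambda>\<omega>. \<phi> (x, Y \<omega>))\<bar> \<le> M" for x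
  proof -
    have "E (\<lambda>\<omega>. \<phi> (x, Y \<omega>)) \<le> E (\<lambda>_. 0) + M"
      using M by (intro expectation_le_shift in_H constant_in_H) simp
    moreover have "E (\<lambda>_. - M) \<le> E (\<lambda>\<omega>. \<phi> (x, Y \<omega>)) + 0"
      using M by (intro expectation_le_shift in_H constant_in_H) simp
    ultimately show ?thesis
      by (simp add: expectation_const)
  qed
  then have "bounded (range (\<lambda>x. E (\<lambda>\<omega>. \<phi> (x, Y \<omega>))))"
    unfolding bounded_iff by auto
  ultimately show ?thesis
    unfolding bounded_lip_def by blast
qed

lemma sl_indep_pair_right:
  fixes Z :: "'w \<Rightarrow> 'a::euclidean_space" and U :: "'w \<Rightarrow> 'b::euclidean_space"
    and V :: "'w \<Rightarrow> 'c::euclidean_space"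
  assumes V: "random_vector H V" and UV: "sl_indep E U V"
    and ZU: "sl_indep E Z U" and ZU_V: "sl_indep E (\<lambda>\<omega>. (Z \<omega>, U \<omega>)) V"
  shows "sl_indep E Z (\<lambda>\<omega>. (U \<omega>, V \<omega>))"
  unfolding sl_indep_def
proof (intro allI impI)
  fix \<phi> :: "'a \<times> 'b \<times> 'c \<Rightarrow> real"
  assume "bounded_lip \<phi>"
  define \<phi>' where "\<phi>' = (\<lambda>x. \<phi> ((\<lambda>((z, u), v). (z, (u, v))) x))"
  have \<phi>': "bounded_lip \<phi>'"
    unfolding \<phi>'_def by (rule bounded_lip_compose[OF \<open>bounded_lip \<phi>\<close> lipschitz_on_prod_assoc])
  define \<psi> where "\<psi> = (\<lambda>zu. E (\<lambda>\<omega>. \<phi>' (zu, V \<omega>)))"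
  have \<psi>: "bounded_lip \<psi>"
    unfolding \<psi>_def by (rule bounded_lip_partial_expectation[OF V \<phi>'])
  have fixed_first: "E (\<lambda>\<omega>. \<psi> (z, U \<omega>)) = E (\<lambda>\<omega>. \<phi> (z, (U \<omega>, V \<omega>)))" for z
    using sl_indepD[OF sl_indep_Pair_const[OF UV] \<phi>', of z]
    unfolding \<psi>_def \<phi>'_def prod.case by (rule sym)
  have "E (\<lambda>\<omega>. \<phi> (Z \<omega>, (U \<omega>, V \<omega>))) = E (\<lambda>\<omega>. \<phi>' ((Z \<omega>, U \<omega>), V \<omega>))"
    by (simp add: \<phi>'_def)
  also have "\<dots> = E (\<lambda>\<omega>. \<psi> (Z \<omega>, U \<omega>))"
    unfolding \<psi>_def by (rule sl_indepD[OF ZU_V \<phi>'])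
  also have "\<dots> = E (\<lambda>\<omega>. E (\<lambda>\<omega>'. \<psi> (Z \<omega>, U \<omega>')))"
    by (rule sl_indepD[OF ZU \<psi>])
  also have "\<dots> = E (\<lambda>\<omega>. E (\<lambda>\<omega>'. \<phi> (Z \<omega>, (U \<omega>', V \<omega>'))))"
    by (simp add: fixed_first)
  finally show "E (\<lambda>\<omega>. \<phi> (Z \<omega>, U \<omega>, V \<omega>)) = E (\<lambda>\<omega>. E (\<lambda>\<omega>'. \<phi> (Z \<omega>, U \<omega>', V \<omega>')))" .
qed

lemma sl_indep_pair_left:
  fixes Z :: "'w \<Rightarrow> 'a::euclidean_space" and U :: "'w \<Rightarrow> 'b::euclidean_space"
    and V :: "'w \<Rightarrow> 'c::euclidean_space"
  assumes V: "random_vector H V" and UV: "sl_indep E U V"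
    and Z_UV: "sl_indep E Z (\<lambda>\<omega>. (U \<omega>, V \<omega>))"
  shows "sl_indep E (\<lambda>\<omega>. (Z \<omega>, U \<omega>)) V"
  unfolding sl_indep_def
proof (intro allI impI)
  fix \<phi> :: "('a \<times> 'b) \<times> 'c \<Rightarrow> real"
  assume "bounded_lip \<phi>"
  define \<phi>' where "\<phi>' = (\<lambda>x. \<phi> ((\<lambda>(z, (u, v)). ((z, u), v)) x))"
  have \<phi>': "bounded_lip \<phi>'"
    unfolding \<phi>'_def by (rule bounded_lip_compose[OF \<open>bounded_lip \<phi>\<close> lipschitz_on_prod_assoc_inv])
  define \<psi> where "\<psi> = (\<lambda>zu. E (\<lambda>\<omega>. \<phi> (zu, V \<omega>)))"
  have \<psi>: "bounded_lip \<psi>"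
    unfolding \<psi>_def by (rule bounded_lip_partial_expectation[OF V \<open>bounded_lip \<phi>\<close>])
  have fixed_first: "E (\<lambda>\<omega>. \<psi> (z, U \<omega>)) = E (\<lambda>\<omega>. \<phi>' (z, (U \<omega>, V \<omega>)))" for z
    using sl_indepD[OF sl_indep_Pair_const[OF UV] \<open>bounded_lip \<phi>\<close>, of z]
    unfolding \<psi>_def \<phi>'_def prod.case by (rule sym)
  have "E (\<lambda>\<omega>. \<phi> ((Z \<omega>, U \<omega>), V \<omega>)) = E (\<lambda>\<omega>. \<phi>' (Z \<omega>, (U \<omega>, V \<omega>)))"
    by (simp add: \<phi>'_def)
  also have "\<dots> = E (\<lambda>\<omega>. E (\<lambda>\<omega>'. \<phi>' (Z \<omega>, (U \<omega>', V \<omega>'))))"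
    by (rule sl_indepD[OF Z_UV \<phi>'])
  also have "\<dots> = E (\<lambda>\<omega>. E (\<lambda>\<omega>'. \<psi> (Z \<omega>, U \<omega>')))"
    by (simp add: fixed_first)
  also have "\<dots> = E (\<lambda>\<omega>. \<psi> (Z \<omega>, U \<omega>))"
    by (rule sl_indepD[OF sl_indep_fst_right[OF Z_UV] \<psi>, symmetric])
  finally show "E (\<lambda>\<omega>. \<phi> ((Z \<omega>, U \<omega>), V \<omega>)) = E (\<lambda>\<omega>. E (\<lambda>\<omega>'. \<phi> ((Z \<omega>, U \<omega>), V \<omega>')))"
    by (simp add: \<psi>_def)
qed

lemma sl_indep_pair_iff:
  fixes Z :: "'w \<Rightarrow> 'a::euclidean_space" and U :: "'w \<Rightarrow> 'b::euclidean_space"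
    and V :: "'w \<Rightarrow> 'c::euclidean_space"
  assumes "random_vector H V" and "sl_indep E U V"
  shows "sl_indep E Z U \<and> sl_indep E (\<lambda>\<omega>. (Z \<omega>, U \<omega>)) V \<longleftrightarrow> sl_indep E Z (\<lambda>\<omega>. (U \<omega>, V \<omega>))"
proof
  assume "sl_indep E Z U \<and> sl_indep E (\<lambda>\<omega>. (Z \<omega>, U \<omega>)) V"
  then show "sl_indep E Z (\<lambda>\<omega>. (U \<omega>, V \<omega>))"
    using sl_indep_pair_right[OF assms] by blast
next
  assume Z_UV: "sl_indep E Z (\<lambda>\<omega>. (U \<omega>, V \<omega>))"
  show "sl_indep E Z U \<and> sl_indep E (\<lambda>\<omega>. (Z \<omega>, U \<omega>)) V"
    using sl_indep_fst_right[OF Z_UV] sl_indep_pair_left[OF assms Z_UV] ..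
qed

end

theorem mainTheorem19:
  fixes H :: "('w \<Rightarrow> real) set" and E :: "('w \<Rightarrow> real) \<Rightarrow> real"
    and X1 :: "'w \<Rightarrow> 'a::euclidean_space" and X2 :: "'w \<Rightarrow> 'b::euclidean_space"
    and X3 :: "'w \<Rightarrow> 'c::euclidean_space" and X4 :: "'w \<Rightarrow> 'd::euclidean_space"
  assumes "sublinear_expectation_space H E"
    and "random_vector H X1" and "random_vector H X2"
    and "random_vector H X3" and "random_vector H X4"
  shows "(sl_indep E X1 X2 \<and>
          sl_indep E (\<lambda>\<omega>. (X1 \<omega>, X2 \<omega>)) X3 \<and>
          sl_indep E (\<lambda>\<omega>. ((X1 \<omega>, X2 \<omega>), X3 \<omega>)) X4)
     \<longleftrightarrow>
         (sl_indep E (\<lambda>\<omega>. (X1 \<omega>, X2 \<omega>)) (\<lambda>\<omega>. (X3 \<omega>, X4 \<omega>)) \<and>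
          sl_indep E X1 X2 \<and> sl_indep E X3 X4)"
proof -
  interpret sublinear_expectation H E
    by (rule sublinear_expectation.intro) (rule assms(1))
  have "sl_indep E X3 X4" if "sl_indep E (\<lambda>\<omega>. ((X1 \<omega>, X2 \<omega>), X3 \<omega>)) X4"
    using sl_indep_snd_left[OF that] .
  then show ?thesis
    using sl_indep_pair_iff[OF assms(5), where Z = "\<lambda>\<omega>. (X1 \<omega>, X2 \<omega>)" and U = X3] by blast
qed

end
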